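(* Let $\Phi\in\Gamma_0(\mathbb{E})$ be Legendre and let $C\subseteq\mathbb{E}$ be a closed convex set with $C\cap\operatorname{int}\operatorname{dom}\Phi\neq\emptyset$. Assume that $D_\Phi(x,\cdot)$ is coercive for some $x\in\operatorname{dom}\Phi\cap C$. Then the Bregman projection $y\mapsto\operatorname{proj}_\Phi(y,C)$ is continuous on $\operatorname{int}\operatorname{dom}\Phi$.
   Context: $\mathbb{E}$ is a finite-dimensional Euclidean space; $\Gamma_0(\mathbb{E})$ the proper lsc convex functions $\mathbb{E}\to\mathbb{R}\cup\{+\infty\}$. $\Phi$ is Legendre if it is essentially smooth ($\operatorname{int}\operatorname{dom}\Phi\ne\emptyset$, differentiable there, $\|\nabla\Phi(z^\nu)\|\to\infty$ whenever $\operatorname{int}\operatorname{dom}\Phi\ni z^\nu\to z\in\operatorname{bdry}\operatorname{dom}\Phi$) and essentially strictly convex (strictly convex on every convex subset of $\operatorname{dom}\partial\Phi$). $D_\Phi(z_1,z_2)=\Phi(z_1)-\Phi(z_2)-\langle\nabla\Phi(z_2),z_1-z_2\rangle$ if $z_1\in\operatorname{dom}\Phi$, $z_2\in\operatorname{int}\operatorname{dom}\Phi$, and $+\infty$ otherwise. The Bregman projection onto $C$ is $\operatorname{proj}_\Phi(y,C)=\operatorname{argmin}_{x\in C}D_\Phi(x,y)$. It is known (Bauschke–Borwein) that under the stated assumptions on $C$, for every $y\in\operatorname{int}\operatorname{dom}\Phi$ this argmin is a single point lying in $C\cap\operatorname{int}\operatorname{dom}\Phi$, characterized by $\langle\nabla\Phi(\bar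 z)-\nabla\Phi(y),z-\bar z\rangle\ge0$ for all $z\in C$ (with $\bar z\in C\cap\operatorname{int}\operatorname{dom}\Phi$). A function $h$ is coercive if $h(z)\to\infty$ as $\|z\|\to\infty$. *)

theory Defs
  imports "HOL-Analysis.Analysis"
begin

definition edom :: "('a::euclidean_space \<Rightarrow> ereal) \<Rightarrow> 'a set" where
  "edom \<Phi> = {x. \<Phi> x < \<infinity>}"

definition proper_fun :: "('a::euclidean_space \<Rightarrow> ereal) \<Rightarrow> bool" where
  "proper_fun \<Phi> \<longleftrightarrow> (\<forall>x. \<Phi> x \<noteq> -\<infinity>) \<and> edom \<Phi> \<noteq> {}"

definition lsc_fun :: "('a::euclidean_space \<Rightarrow> ereal) \<Rightarrow> bool" where
  "lsc_fun \<Phi> \<longleftrightarrow> (\<forall>x. \<Phi> x \<le> Liminf (at x) \<Phi>)"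

definition convex_fun :: "('a::euclidean_space \<Rightarrow> ereal) \<Rightarrow> bool" where
  "convex_fun \<Phi> \<longleftrightarrow> (\<forall>x y t. 0 \<le> t \<and> t \<le> 1 \<longrightarrow>
      \<Phi> ((1 - t) *\<^sub>R x + t *\<^sub>R y) \<le> ereal (1 - t) * \<Phi> x + ereal t * \<Phi> y)"

definition Gamma0 :: "('a::euclidean_space \<Rightarrow> ereal) \<Rightarrow> bool" where
  "Gamma0 \<Phi> \<longleftrightarrow> proper_fun \<Phi> \<and> lsc_fun \<Phi> \<and> convex_fun \<Phi>"

text \<open>Gradient at an interior point of the domain (real-valued there).\<close>
definition egrad :: "('a::euclidean_space \<Rightarrow> ereal) \<Rightarrow> 'a \<Rightarrow> 'a" where
  "egrad \<Phi> z = (SOME g. ((\<lambda>w. real_of_ereal (\<Phi> w)) has_derivative (\<lambda>h. g \<bullet> h)) (at z))"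

definition subdiff :: "('a::euclidean_space \<Rightarrow> ereal) \<Rightarrow> 'a \<Rightarrow> 'a set" where
  "subdiff \<Phi> x = (if x \<in> edom \<Phi> then
      {g. \<forall>y. \<Phi> y \<ge> \<Phi> x + ereal (g \<bullet> (y - x))} else {})"

definition essentially_smooth :: "('a::euclidean_space \<Rightarrow> ereal) \<Rightarrow> bool" where
  "essentially_smooth \<Phi> \<longleftrightarrow>
     interior (edom \<Phi>) \<noteq> {} \<and>
     (\<forall>z \<in> interior (edom \<Phi>). (\<lambda>w. real_of_ereal (\<Phi> w)) differentiable (at z)) \<and>
     (\<forall>zs z. (\<forall>n. zs n \<in> interior (edom \<Phi>)) \<and> zs \<longlonglongrightarrow> z \<and> z \<in> frontier (edom \<Phi>)
        \<longrightarrow> filterlim (\<lambda>n. norm (egrad \<Phi> (zs n))) at_top sequentially)"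

definition essentially_strictly_convex :: "('a::euclidean_space \<Rightarrow> ereal) \<Rightarrow> bool" where
  "essentially_strictly_convex \<Phi> \<longleftrightarrow>
     (\<forall>S. convex S \<and> S \<subseteq> {x. subdiff \<Phi> x \<noteq> {}} \<longrightarrow>
        (\<forall>x\<in>S. \<forall>y\<in>S. \<forall>t. x \<noteq> y \<and> 0 < t \<and> t < 1 \<longrightarrow>
           \<Phi> ((1 - t) *\<^sub>R x + t *\<^sub>R y) < ereal (1 - t) * \<Phi> x + ereal t * \<Phi> y))"

definition legendre :: "('a::euclidean_space \<Rightarrow> ereal) \<Rightarrow> bool" where
  "legendre \<Phi> \<longleftrightarrow> essentially_smooth \<Phi> \<and> essentially_strictly_convex \<Phi>"

definition bregman :: "('a::euclidean_space \<Rightarrow> ereal) \<Rightarrow> 'a \<Rightarrow> 'a \<Rightarrow> ereal" where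
  "bregman \<Phi> z1 z2 = (if z1 \<in> edom \<Phi> \<and> z2 \<in> interior (edom \<Phi>)
      then \<Phi> z1 - \<Phi> z2 - ereal (egrad \<Phi> z2 \<bullet> (z1 - z2)) else \<infinity>)"

definition bregman_proj :: "('a::euclidean_space \<Rightarrow> ereal) \<Rightarrow> 'a \<Rightarrow> 'a set \<Rightarrow> 'a" where
  "bregman_proj \<Phi> y C = (THE z. z \<in> C \<and> (\<forall>w\<in>C. bregman \<Phi> z y \<le> bregman \<Phi> w y))"

definition coercive :: "('a::real_normed_vector \<Rightarrow> ereal) \<Rightarrow> bool" where
  "coercive h \<longleftrightarrow> (h \<longlongrightarrow> \<infinity>) at_infinity"

end

theory Submission
  imports Defs
begin

(* Write U = int dom Phi and D(z,y) for the Bregman distance. For y in U, D(.,y) is lower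
   semicontinuous, vanishes only at y and grows at least linearly away from y, so it attains its
   minimum over the closed set C; essential smoothness keeps the minimiser off the boundary of
   dom Phi, and strict convexity makes it unique. As an interior minimiser, the projection p y
   satisfies the variational inequality, which amounts to the three-point inequality
   D(w, p y) + D(p y, y) <= D(w, y) for w in C. Now let y_n -> y in U. Taking w = x, coercivity of D(x,.) keeps p y_n bounded, and the
   three-point inequality together with the identity
   D(w,y) = D(w,z) + D(z,y) + <grad Phi z - grad Phi y, w - z> yields
     D(p y_n, p y) <= D(y_n, y) + <grad Phi y_n - grad Phi y, p y_n - y_n> + D(p y, y_n) - D(p y, y),
   which tends to 0 because Phi and grad Phi are continuous on U. Linear growth of D(., p y)
   turns this into p y_n -> p y. *)

lemma linear_functional_eq_inner:
  fixes D :: "'a::euclidean_space \<Rightarrow> real"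
  assumes "linear D"
  shows "D = (\<lambda>h. adjoint D 1 \<bullet> h)"
  using adjoint_works[OF assms] by (auto simp: inner_commute)

lemma has_derivative_inner_ge_of_right_increments:
  fixes F :: "'a::real_inner \<Rightarrow> real"
  assumes deriv: "(F has_derivative (\<lambda>h. v \<bullet> h)) (at z)"
    and incr: "\<forall>\<^sub>F t in at_right 0. t * c \<le> F (z + t *\<^sub>R d) - F z"
  shows "c \<le> v \<bullet> d"
proof -
  have "((\<lambda>t. z + t *\<^sub>R d) has_derivative (\<lambda>t. t *\<^sub>R d)) (at 0)"
    by (auto intro!: derivative_eq_intros)
  moreover have "(F has_derivative (\<lambda>h. v \<bullet> h)) (at (z + 0 *\<^sub>R d))"
    using deriv by simp
  ultimately have "((\<lambda>t. F (z + t *\<^sub>R d)) has_derivative (\<lambda>t. v \<bullet> (t *\<^sub>R d))) (at 0)"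
    by (rule has_derivative_compose)
  then have "((\<lambda>t. F (z + t *\<^sub>R d)) has_real_derivative v \<bullet> d) (at 0)"
    unfolding has_field_derivative_def by (rule has_derivative_eq_rhs) auto
  then have "((\<lambda>t. (F (z + t *\<^sub>R d) - F z) / t) \<longlongrightarrow> v \<bullet> d) (at_right 0)"
    by (auto simp: DERIV_def intro: tendsto_mono[OF at_within_le_at])
  moreover have "\<forall>\<^sub>F t in at_right 0. c \<le> (F (z + t *\<^sub>R d) - F z) / t"
    using incr eventually_at_right_less[of 0]
    by eventually_elim (simp add: field_simps)
  ultimately show ?thesis
    by (rule tendsto_lowerbound) simp
qed

lemma compact_attains_inf_lsc:
  fixes F :: "'a::topological_space \<Rightarrow> 'b::linorder"
  assumes "compact K" "K \<noteq> {}"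
    and lsc: "\<And>x a. x \<in> K \<Longrightarrow> a < F x \<Longrightarrow> \<forall>\<^sub>F w in at x. a < F w"
  shows "\<exists>x\<in>K. \<forall>w\<in>K. F x \<le> F w"
proof (rule ccontr)
  assume "\<not> ?thesis"
  then obtain W where W: "\<And>x. x \<in> K \<Longrightarrow> W x \<in> K \<and> F (W x) < F x"
    by (metis not_le)
  have "\<exists>S. open S \<and> x \<in> S \<and> (\<forall>w\<in>S. F (W x) < F w)" if x: "x \<in> K" for x
  proof -
    obtain S where "open S" "x \<in> S" "\<forall>w\<in>S. w \<noteq> x \<longrightarrow> F (W x) < F w"
      using lsc[OF x W[OF x, THEN conjunct2]] unfolding eventually_at_topological by auto
    then show ?thesis using W[OF x] by (intro exI[of _ S]) auto
  qed
  then obtain S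
    where S: "\<And>x. x \<in> K \<Longrightarrow> open (S x) \<and> x \<in> S x \<and> (\<forall>w\<in>S x. F (W x) < F w)"
    by metis
  obtain T where T: "T \<subseteq> K" "finite T" "K \<subseteq> (\<Union>x\<in>T. S x)"
    using compactE_image[OF assms(1), of K S] S by blast
  then have "T \<noteq> {}" using assms(2) by blast
  define m where "m = Min ((\<lambda>x. F (W x)) ` T)"
  have "m \<in> (\<lambda>x. F (W x)) ` T"
    unfolding m_def using T(2) \<open>T \<noteq> {}\<close> by (intro Min_in) auto
  then obtain x0 where x0: "x0 \<in> T" "F (W x0) = m"
    by blast
  obtain x1 where x1: "x1 \<in> T" "W x0 \<in> S x1"
    using T x0(1) W by blast
  then have "F (W x1) < m"
    using S T(1) x0(2) by blast
  moreover have "m \<le> F (W x1)"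
    using T(2) x1(1) by (simp add: m_def)
  ultimately show False by simp
qed

section \<open>Legendre functions and their Bregman distance\<close>

locale legendre_function =
  fixes \<Phi> :: "'a::euclidean_space \<Rightarrow> ereal"
  assumes Gamma0: "Gamma0 \<Phi>" and legendre: "legendre \<Phi>"
begin

abbreviation U :: "'a set" where
  "U \<equiv> interior (edom \<Phi>)"

(* Outside edom Phi this is the junk value real_of_ereal \<infinity> = 0. *)
abbreviation f :: "'a \<Rightarrow> real" where
  "f x \<equiv> real_of_ereal (\<Phi> x)"

abbreviation g :: "'a \<Rightarrow> 'a" where
  "g \<equiv> egrad \<Phi>"

(* The Bregman distance as a real number, meaningful for z \<in> edom \<Phi> and y \<in> U (see bregman_eq). *)
abbreviation D :: "'a \<Rightarrow> 'a \<Rightarrow> real" where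
  "D z y \<equiv> f z - f y - g y \<bullet> (z - y)"

lemma edom_real: "x \<in> edom \<Phi> \<Longrightarrow> \<exists>r. \<Phi> x = ereal r"
  using Gamma0 unfolding Gamma0_def proper_fun_def edom_def by (cases "\<Phi> x") auto

lemma not_edom_eq_PInf: "x \<notin> edom \<Phi> \<Longrightarrow> \<Phi> x = \<infinity>"
  unfolding edom_def by simp

lemma U_subset_edom: "U \<subseteq> edom \<Phi>"
  by (rule interior_subset)

lemma convex_combination_in_edom:
  assumes "x \<in> edom \<Phi>" "y \<in> edom \<Phi>" "0 \<le> t" "t \<le> 1"
  shows "(1 - t) *\<^sub>R x + t *\<^sub>R y \<in> edom \<Phi>"
    and "f ((1 - t) *\<^sub>R x + t *\<^sub>R y) \<le> (1 - t) * f x + t * f y"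
proof -
  have "\<Phi> ((1 - t) *\<^sub>R x + t *\<^sub>R y) \<le> ereal (1 - t) * \<Phi> x + ereal t * \<Phi> y"
    using Gamma0 assms unfolding Gamma0_def convex_fun_def by blast
  also have "\<dots> = ereal ((1 - t) * f x + t * f y)"
    using edom_real[OF assms(1)] edom_real[OF assms(2)] by auto
  finally have le: "\<Phi> ((1 - t) *\<^sub>R x + t *\<^sub>R y) \<le> ereal ((1 - t) * f x + t * f y)" .
  then show "(1 - t) *\<^sub>R x + t *\<^sub>R y \<in> edom \<Phi>"
    unfolding edom_def by (auto intro: le_less_trans)
  with le show "f ((1 - t) *\<^sub>R x + t *\<^sub>R y) \<le> (1 - t) * f x + t * f y"
    using edom_real by fastforce
qed

lemma convex_edom: "convex (edom \<Phi>)"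
  unfolding convex_alt using convex_combination_in_edom(1) by blast

lemma convex_U: "convex U"
  using convex_edom by (rule convex_interior)

lemma convex_combination_in_U:
  assumes "y \<in> U" "z \<in> edom \<Phi>" "0 \<le> t" "t < 1"
  shows "(1 - t) *\<^sub>R y + t *\<^sub>R z \<in> U"
  using mem_interior_convex_shrink[OF convex_edom assms(1,2), of "1 - t"] assms(3,4)
  by (simp add: algebra_simps)

lemma has_derivative_grad:
  assumes "z \<in> U"
  shows "(f has_derivative (\<lambda>h. g z \<bullet> h)) (at z)"
proof -
  have "f differentiable (at z)"
    using legendre assms unfolding legendre_def essentially_smooth_def by blast
  then obtain L where L: "(f has_derivative L) (at z)"
    unfolding differentiable_def by blast
  then have "(f has_derivative (\<lambda>h. adjoint L 1 \<bullet> h)) (at z)"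
    using linear_functional_eq_inner[OF has_derivative_linear[OF L]] by simp
  then show ?thesis
    unfolding egrad_def by (rule someI)
qed

lemma filterlim_norm_grad_at_frontier:
  assumes "\<And>n. zs n \<in> U" "zs \<longlonglongrightarrow> z" "z \<in> frontier (edom \<Phi>)"
  shows "filterlim (\<lambda>n. norm (g (zs n))) at_top sequentially"
  using legendre assms unfolding legendre_def essentially_smooth_def by blast

lemma continuous_on_f: "continuous_on U f"
  using has_derivative_grad
  by (intro continuous_at_imp_continuous_on ballI has_derivative_continuous) blast

lemma eventually_at_right_0_lt_1: "\<forall>\<^sub>F t in at_right (0::real). 0 < t \<and> t < 1"
  by (auto simp: eventually_at_right_field intro!: exI[of _ 1])

lemma grad_ineq:
  assumes z: "z \<in> U" and w: "w \<in> edom \<Phi>"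
  shows "f z + g z \<bullet> (w - z) \<le> f w"
proof -
  have "((\<lambda>x. - f x) has_derivative (\<lambda>h. (- g z) \<bullet> h)) (at z)"
    using has_derivative_minus[OF has_derivative_grad[OF z]] by simp
  moreover have "\<forall>\<^sub>F t in at_right 0. t * (f z - f w) \<le> - f (z + t *\<^sub>R (w - z)) - - f z"
    using eventually_at_right_0_lt_1
  proof eventually_elim
    case (elim t)
    have "z + t *\<^sub>R (w - z) = (1 - t) *\<^sub>R z + t *\<^sub>R w"
      by (simp add: algebra_simps)
    with convex_combination_in_edom(2)[OF subsetD[OF U_subset_edom z] w, of t] elim
    show ?case by (simp add: algebra_simps)
  qed
  ultimately have "f z - f w \<le> (- g z) \<bullet> (w - z)"
    by (rule has_derivative_inner_ge_of_right_increments)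
  then show ?thesis by simp
qed

lemma grad_in_subdiff:
  assumes z: "z \<in> U"
  shows "g z \<in> subdiff \<Phi> z"
proof -
  have "\<Phi> z + ereal (g z \<bullet> (w - z)) \<le> \<Phi> w" for w
  proof (cases "w \<in> edom \<Phi>")
    case True
    then show ?thesis
      using grad_ineq[OF z True] edom_real[OF True] edom_real[OF subsetD[OF U_subset_edom z]]
      by auto
  qed (simp add: not_edom_eq_PInf)
  then show ?thesis
    using z U_subset_edom by (auto simp: subdiff_def)
qed

lemma strictly_convex_on_U:
  assumes "x \<in> U" "y \<in> U" "x \<noteq> y" "0 < t" "t < 1"
  shows "f ((1 - t) *\<^sub>R x + t *\<^sub>R y) < (1 - t) * f x + t * f y"
proof -
  have "U \<subseteq> {x. subdiff \<Phi> x \<noteq> {}}"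
    using grad_in_subdiff by blast
  then have "\<Phi> ((1 - t) *\<^sub>R x + t *\<^sub>R y) < ereal (1 - t) * \<Phi> x + ereal t * \<Phi> y"
    using legendre convex_U assms
    unfolding legendre_def essentially_strictly_convex_def by blast
  moreover have "(1 - t) *\<^sub>R x + t *\<^sub>R y \<in> U"
    using convex_U assms unfolding convex_alt by simp
  moreover obtain a b where "\<Phi> x = ereal a" "\<Phi> y = ereal b"
    using edom_real assms(1,2) U_subset_edom by blast
  ultimately show ?thesis
    using U_subset_edom edom_real by fastforce
qed

(* Apply the gradient inequality at z to the point of the sphere about c in direction g z - a. *)
lemma norm_grad_minus_le:
  assumes z: "z \<in> U" and r: "0 \<le> r" and ball: "cball c r \<subseteq> edom \<Phi>"
    and M: "\<And>w. w \<in> cball c r \<Longrightarrow> f w - a \<bullet> w \<le> M"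
  shows "r * norm (g z - a) \<le> M - (f z - a \<bullet> z) - (g z - a) \<bullet> (c - z)"
proof -
  define u where "u = g z - a"
  define w where "w = c + (if u = 0 then 0 else (r / norm u) *\<^sub>R u)"
  have "w \<in> cball c r"
    using r by (auto simp: w_def dist_norm)
  have "u \<bullet> (w - c) = r * norm u"
    by (auto simp: w_def inner_scaleR_right dot_square_norm power2_eq_square)
  moreover have "f z + g z \<bullet> (w - z) \<le> f w"
    using grad_ineq[OF z] ball \<open>w \<in> cball c r\<close> by blast
  moreover have "f w - a \<bullet> w \<le> M"
    using M \<open>w \<in> cball c r\<close> .
  ultimately show ?thesis
    unfolding u_def by (simp add: inner_diff_left inner_diff_right algebra_simps)
qed

lemma norm_grad_diff_le:
  assumes y0: "y0 \<in> U" and y: "y \<in> U" and "0 \<le> s" and ball: "cball y s \<subseteq> edom \<Phi>"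
    and K: "\<And>w. w \<in> cball y s \<Longrightarrow> D w y0 \<le> K"
  shows "s * norm (g y - g y0) \<le> K"
proof -
  have "s * norm (g y - g y0) \<le> (f y0 - g y0 \<bullet> y0 + K) - (f y - g y0 \<bullet> y) - (g y - g y0) \<bullet> (y - y)"
    using K by (intro norm_grad_minus_le[OF y \<open>0 \<le> s\<close> ball]) (force simp: inner_diff_right)
  also have "\<dots> = K - D y y0"
    by (simp add: inner_diff_right)
  also have "\<dots> \<le> K"
    using grad_ineq[OF y0] y U_subset_edom by force
  finally show ?thesis .
qed

lemma continuous_on_grad: "continuous_on U g"
  unfolding continuous_on_iff
proof (intro ballI allI impI)
  fix y0 :: 'a and \<epsilon> :: real
  assume y0: "y0 \<in> U" and "\<epsilon> > 0"
  define e where "e = \<epsilon> / 4"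
  have "e > 0" using \<open>\<epsilon> > 0\<close> by (simp add: e_def)
  obtain r where "r > 0" "ball y0 r \<subseteq> U"
    using y0 open_interior openE by blast
  obtain \<delta> where "\<delta> > 0" and taylor: "\<And>w. norm (w - y0) < \<delta> \<Longrightarrow>
      norm (f w - f y0 - g y0 \<bullet> (w - y0)) \<le> e * norm (w - y0)"
    using has_derivative_grad[OF y0] \<open>e > 0\<close> unfolding has_derivative_at_alt by blast
  define s where "s = min \<delta> r / 2"
  have "s > 0" using \<open>\<delta> > 0\<close> \<open>r > 0\<close> by (simp add: s_def)
  show "\<exists>d>0. \<forall>y\<in>U. dist y y0 < d \<longrightarrow> dist (g y) (g y0) < \<epsilon>"
  proof (intro exI[of _ s] conjI ballI impI)
    fix y assume y: "y \<in> U" and "dist y y0 < s"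
    have near: "norm (w - y0) < 2 * s" if "w \<in> cball y s" for w
      using that \<open>dist y y0 < s\<close> norm_triangle_lt[of "w - y" "y - y0" "2 * s"]
      by (simp add: dist_norm norm_minus_commute)
    have "cball y s \<subseteq> ball y0 r"
      using near by (force simp: s_def dist_norm norm_minus_commute)
    then have "cball y s \<subseteq> edom \<Phi>"
      using \<open>ball y0 r \<subseteq> U\<close> U_subset_edom by blast
    then have "s * norm (g y - g y0) \<le> e * (2 * s)"
    proof (rule norm_grad_diff_le[OF y0 y less_imp_le[OF \<open>s > 0\<close>]])
      fix w assume "w \<in> cball y s"
      then have "D w y0 \<le> e * norm (w - y0)"
        using taylor[of w] near[of w] by (simp add: s_def)
      also have "\<dots> \<le> e * (2 * s)"
        using near[OF \<open>w \<in> cball y s\<close>] \<open>e > 0\<close> by simp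
      finally show "D w y0 \<le> e * (2 * s)" .
    qed
    then have "norm (g y - g y0) \<le> 2 * e"
      using \<open>s > 0\<close> by (simp add: field_simps)
    then show "dist (g y) (g y0) < \<epsilon>"
      using \<open>\<epsilon> > 0\<close> by (simp add: dist_norm e_def)
  qed (rule \<open>s > 0\<close>)
qed

lemma bregman_eq:
  assumes "y \<in> U"
  shows "bregman \<Phi> z y = (if z \<in> edom \<Phi> then ereal (D z y) else \<infinity>)"
  using assms edom_real[of z] edom_real[OF subsetD[OF U_subset_edom assms]]
  by (auto simp: bregman_def)

lemma bregman_nonneg: "y \<in> U \<Longrightarrow> z \<in> edom \<Phi> \<Longrightarrow> 0 \<le> D z y"
  using grad_ineq[of y z] by simp

lemma bregman_three_point: "D w y = D w z + D z y + (g z - g y) \<bullet> (w - z)"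
  by (simp add: inner_diff_left inner_diff_right)

lemma bregman_segment_le:
  assumes "y \<in> U" "z \<in> edom \<Phi>" "0 \<le> t" "t \<le> 1"
  shows "D ((1 - t) *\<^sub>R y + t *\<^sub>R z) y \<le> t * D z y"
proof -
  have "(1 - t) *\<^sub>R y + t *\<^sub>R z - y = t *\<^sub>R (z - y)"
    by (simp add: algebra_simps)
  then show ?thesis
    using convex_combination_in_edom(2)[OF subsetD[OF U_subset_edom assms(1)] assms(2-4)]
    by (simp add: algebra_simps)
qed

lemma bregman_segment_less:
  assumes "y \<in> U" "z \<in> U" "z \<noteq> y" "0 < t" "t < 1"
  shows "D ((1 - t) *\<^sub>R y + t *\<^sub>R z) y < t * D z y"
proof -
  have "(1 - t) *\<^sub>R y + t *\<^sub>R z - y = t *\<^sub>R (z - y)"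
    by (simp add: algebra_simps)
  then show ?thesis
    using strictly_convex_on_U[OF assms(1,2) assms(3)[symmetric] assms(4,5)]
    by (simp add: algebra_simps)
qed

lemma bregman_pos:
  assumes y: "y \<in> U" and z: "z \<in> edom \<Phi>" and "z \<noteq> y"
  shows "0 < D z y"
proof -
  define m where "m = (1 - 1/2) *\<^sub>R y + (1/2::real) *\<^sub>R z"
  have "m \<in> U"
    unfolding m_def by (rule convex_combination_in_U[OF y z]) auto
  have "(1 - t) *\<^sub>R y + t *\<^sub>R z - y = t *\<^sub>R (z - y)" for t :: real
    by (simp add: algebra_simps)
  then have "m - y = (1/2::real) *\<^sub>R (z - y)"
    unfolding m_def .
  then have "m \<noteq> y"
    using \<open>z \<noteq> y\<close> by auto
  have "0 \<le> D ((1 - 1/2) *\<^sub>R y + (1/2::real) *\<^sub>R m) y"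
    using bregman_nonneg[OF y] convex_combination_in_edom(1)[of y m "1/2"]
      U_subset_edom y \<open>m \<in> U\<close> by auto
  also have "\<dots> < 1/2 * D m y"
    by (rule bregman_segment_less) (use y \<open>m \<in> U\<close> \<open>m \<noteq> y\<close> in auto)
  also have "\<dots> \<le> 1/2 * (1/2 * D z y)"
    using bregman_segment_le[OF y z, of "1/2"] by (simp add: m_def)
  finally show ?thesis by simp
qed

lemma bregman_lsc:
  assumes y: "y \<in> U" and a: "a < bregman \<Phi> z y"
  shows "\<forall>\<^sub>F w in at z. a < bregman \<Phi> w y"
proof -
  define A where "A w = f y + g y \<bullet> (w - y)" for w
  obtain r where r: "a < ereal r" "ereal r < bregman \<Phi> z y"
    using ereal_dense2[OF a] by blast
  have "ereal (r + A z) < \<Phi> z"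
  proof (cases "z \<in> edom \<Phi>")
    case True
    then show ?thesis
      using r(2) bregman_eq[OF y] edom_real[OF True] by (auto simp: A_def)
  qed (simp add: not_edom_eq_PInf)
  then obtain s where s: "ereal (r + A z) < ereal s" "ereal s < \<Phi> z"
    using ereal_dense2 by blast
  have "\<forall>\<^sub>F w in at z. ereal s < \<Phi> w"
    using Gamma0 s(2) le_Liminf_iff unfolding Gamma0_def lsc_fun_def by blast
  moreover have "\<forall>\<^sub>F w in at z. A w < s - r"
    using s(1) by (intro order_tendstoD(2)) (auto simp: A_def intro!: tendsto_eq_intros)
  ultimately show ?thesis
  proof eventually_elim
    case (elim w)
    show ?case
    proof (cases "w \<in> edom \<Phi>")
      case True
      then have "r < D w y"
        using elim edom_real[OF True] by (auto simp: A_def)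
      then show ?thesis
        using r(1) bregman_eq[OF y] True by (simp add: order.strict_trans)
    qed (use r(1) bregman_eq[OF y] in auto)
  qed
qed

(* D(.,y) has a positive minimum on the sphere of radius rho about y, and by convexity along rays
   from y it grows at least linearly beyond that sphere. *)
lemma bregman_linear_growth:
  assumes y: "y \<in> U" and "\<rho> > 0"
  shows "\<exists>\<delta>>0. \<forall>z\<in>edom \<Phi>. \<rho> \<le> norm (z - y) \<longrightarrow> \<delta> * norm (z - y) \<le> D z y"
proof -
  obtain u0 where u0: "u0 \<in> sphere y \<rho>"
    and min: "\<And>w. w \<in> sphere y \<rho> \<Longrightarrow> bregman \<Phi> u0 y \<le> bregman \<Phi> w y"
    using compact_attains_inf_lsc[of "sphere y \<rho>" "\<lambda>w. bregman \<Phi> w y"] bregman_lsc[OF y] \<open>\<rho> > 0\<close>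
    by auto
  define \<delta> where "\<delta> = (if u0 \<in> edom \<Phi> then D u0 y / \<rho> else 1)"
  have "u0 \<noteq> y" using u0 \<open>\<rho> > 0\<close> by auto
  then have "\<delta> > 0"
    using bregman_pos[OF y] \<open>\<rho> > 0\<close> by (simp add: \<delta>_def)
  moreover have "\<delta> * norm (z - y) \<le> D z y" if z: "z \<in> edom \<Phi>" and far: "\<rho> \<le> norm (z - y)" for z
  proof -
    have "0 < norm (z - y)"
      using far \<open>\<rho> > 0\<close> by linarith
    define t where "t = \<rho> / norm (z - y)"
    have t: "0 < t" "t \<le> 1" "t * norm (z - y) = \<rho>"
      using far \<open>\<rho> > 0\<close> \<open>0 < norm (z - y)\<close> by (auto simp: t_def)
    define u where "u = (1 - t) *\<^sub>R y + t *\<^sub>R z"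
    have "u - y = t *\<^sub>R (z - y)" by (simp add: u_def algebra_simps)
    then have "u \<in> sphere y \<rho>"
      using t by (simp add: dist_norm norm_minus_commute[of y])
    moreover have "u \<in> edom \<Phi>"
      unfolding u_def using convex_combination_in_edom(1) y U_subset_edom z t by auto
    ultimately have "u0 \<in> edom \<Phi>" "D u0 y \<le> D u y"
      using min[of u] bregman_eq[OF y] by (auto split: if_splits)
    then have "t * (\<delta> * norm (z - y)) = D u0 y"
      using t(3) \<open>\<rho> > 0\<close> by (simp add: \<delta>_def mult.left_commute[of t])
    also have "\<dots> \<le> t * D z y"
      using \<open>D u0 y \<le> D u y\<close> bregman_segment_le[OF y z, of t] t by (simp add: u_def)
    finally show ?thesis
      using t by simp
  qed
  ultimately show ?thesis by blast
qed

lemma tendsto_of_bregman_tendsto_0: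
  assumes z0: "z0 \<in> U" and zs: "\<And>n. zs n \<in> edom \<Phi>"
    and lim: "(\<lambda>n. D (zs n) z0) \<longlonglongrightarrow> 0"
  shows "zs \<longlonglongrightarrow> z0"
  unfolding tendsto_iff
proof (intro allI impI)
  fix \<epsilon> :: real assume "\<epsilon> > 0"
  obtain \<delta> where "\<delta> > 0"
    and growth: "\<And>z. z \<in> edom \<Phi> \<Longrightarrow> \<epsilon> \<le> norm (z - z0) \<Longrightarrow> \<delta> * norm (z - z0) \<le> D z z0"
    using bregman_linear_growth[OF z0 \<open>\<epsilon> > 0\<close>] by blast
  have "\<forall>\<^sub>F n in sequentially. D (zs n) z0 < \<delta> * \<epsilon>"
    using order_tendstoD(2)[OF lim] \<open>\<delta> > 0\<close> \<open>\<epsilon> > 0\<close> by simp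
  then show "\<forall>\<^sub>F n in sequentially. dist (zs n) z0 < \<epsilon>"
  proof eventually_elim
    case (elim n)
    show ?case
    proof (rule ccontr)
      assume "\<not> dist (zs n) z0 < \<epsilon>"
      then have "\<epsilon> \<le> norm (zs n - z0)" by (simp add: dist_norm)
      with growth[OF zs] have "\<delta> * \<epsilon> \<le> D (zs n) z0"
        by (meson \<open>\<delta> > 0\<close> mult_left_mono order.trans less_imp_le)
      with elim show False by simp
    qed
  qed
qed

lemma continuous_on_bregman_left: "continuous_on U (\<lambda>z. D z y)"
  by (intro continuous_intros continuous_on_f)

lemma continuous_on_bregman_right: "continuous_on U (\<lambda>y. D z y)"
  by (intro continuous_intros continuous_on_f continuous_on_grad)

lemma bregman_attains_inf_on_closed:
  assumes y: "y \<in> U" and "closed C" and c: "c \<in> C" "c \<in> edom \<Phi>"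
  shows "\<exists>z\<in>C. \<forall>w\<in>C. bregman \<Phi> z y \<le> bregman \<Phi> w y"
proof -
  obtain \<delta> where "\<delta> > 0"
    and growth: "\<And>z. z \<in> edom \<Phi> \<Longrightarrow> 1 \<le> norm (z - y) \<Longrightarrow> \<delta> * norm (z - y) \<le> D z y"
    using bregman_linear_growth[OF y, of 1] by auto
  define R where "R = max 1 (D c y / \<delta>)"
  define K where "K = C \<inter> cball y R"
  have "c \<in> K"
  proof (cases "1 \<le> norm (c - y)")
    case True
    then have "norm (c - y) \<le> D c y / \<delta>"
      using growth[OF c(2)] \<open>\<delta> > 0\<close> by (simp add: field_simps)
    then show ?thesis using c by (auto simp: K_def R_def dist_norm norm_minus_commute)
  qed (use c in \<open>auto simp: K_def R_def dist_norm norm_minus_commute\<close>)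
  moreover have "compact K"
    unfolding K_def using \<open>closed C\<close> by (simp add: closed_Int_compact)
  ultimately obtain z where "z \<in> K"
    and min: "\<And>w. w \<in> K \<Longrightarrow> bregman \<Phi> z y \<le> bregman \<Phi> w y"
    using compact_attains_inf_lsc[of K "\<lambda>w. bregman \<Phi> w y"] bregman_lsc[OF y] by blast
  have "bregman \<Phi> z y \<le> bregman \<Phi> w y" if w: "w \<in> C" for w
  proof (cases "w \<in> K")
    case False
    show ?thesis
    proof (cases "w \<in> edom \<Phi>")
      case True
      have "R < norm (w - y)"
        using w False by (auto simp: K_def dist_norm norm_minus_commute)
      moreover have "D c y \<le> \<delta> * R"
        using \<open>\<delta> > 0\<close> pos_divide_le_eq[of \<delta> "D c y" R] by (simp add: R_def mult.commute)
      ultimately have "D c y \<le> D w y"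
        using growth[OF True] \<open>\<delta> > 0\<close> by (smt (verit) R_def max.cobounded1 mult_strict_left_mono)
      then show ?thesis
        using min[OF \<open>c \<in> K\<close>] bregman_eq[OF y] True c(2) by (auto split: if_splits)
    qed (simp add: bregman_eq[OF y])
  qed (rule min)
  then show ?thesis
    using \<open>z \<in> K\<close> by (auto simp: K_def)
qed

end

section \<open>Bregman projections\<close>

locale bregman_projection = legendre_function +
  fixes C :: "'a set"
  assumes closed_C: "closed C" and convex_C: "convex C" and C_meets_U: "C \<inter> U \<noteq> {}"
begin

abbreviation proj :: "'a \<Rightarrow> 'a" where
  "proj y \<equiv> bregman_proj \<Phi> y C"

lemma norm_grad_on_segment_to_minimizer_le:
  assumes y: "y \<in> U" and zb: "zb \<in> C" "zb \<in> edom \<Phi>"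
    and min: "\<And>w. w \<in> C \<Longrightarrow> w \<in> U \<Longrightarrow> D zb y \<le> D w y"
    and c: "c \<in> C" "c \<in> U" and "0 \<le> r" and ball: "cball c r \<subseteq> edom \<Phi>"
    and M: "\<And>w. w \<in> cball c r \<Longrightarrow> f w \<le> M" and s: "0 < s" "s < 1"
  shows "r * norm (g (zb + s *\<^sub>R (c - zb))) \<le> M - f zb - g y \<bullet> (c - zb)"
proof -
  define d where "d = c - zb"
  define L where "L = g y \<bullet> d"
  define z where "z = zb + s *\<^sub>R d"
  have z_eq: "z = (1 - (1 - s)) *\<^sub>R c + (1 - s) *\<^sub>R zb"
    by (simp add: z_def d_def algebra_simps)
  have "z \<in> U"
    unfolding z_eq by (rule convex_combination_in_U[OF c(2) zb(2)]) (use s in auto)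
  moreover have "z \<in> C"
    using convexD[OF convex_C c(1) zb(1), of s "1 - s"] s z_eq by simp
  ultimately have "D zb y \<le> D z y"
    using min by blast
  then have "f zb + s * L \<le> f z"
    by (simp add: z_def L_def inner_diff_right inner_add_right)
  moreover have "f z + g z \<bullet> (zb - z) \<le> f zb"
    using grad_ineq[OF \<open>z \<in> U\<close> zb(2)] .
  ultimately have "s * L \<le> s * (g z \<bullet> d)"
    by (simp add: z_def)
  then have "(1 - s) * L \<le> (1 - s) * (g z \<bullet> d)"
    using s by (simp add: mult_le_cancel_left_pos)
  moreover have "r * norm (g z) \<le> M - f z - g z \<bullet> (c - z)"
    using norm_grad_minus_le[OF \<open>z \<in> U\<close> \<open>0 \<le> r\<close> ball, of 0 M] M by simp
  moreover have "g z \<bullet> (c - z) = (1 - s) * (g z \<bullet> d)"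
    by (simp add: z_def d_def algebra_simps)
  moreover have "s * L + (1 - s) * L = L"
    by (simp add: algebra_simps)
  ultimately show ?thesis
    using \<open>f zb + s * L \<le> f z\<close> unfolding z_def d_def L_def by linarith
qed

lemma grad_bounded_on_segment_to_minimizer:
  assumes y: "y \<in> U" and zb: "zb \<in> C" "zb \<in> edom \<Phi>"
    and min: "\<And>w. w \<in> C \<Longrightarrow> w \<in> U \<Longrightarrow> D zb y \<le> D w y"
    and c: "c \<in> C" "c \<in> U"
  shows "\<exists>B. \<forall>s. 0 < s \<and> s < 1 \<longrightarrow> norm (g (zb + s *\<^sub>R (c - zb))) \<le> B"
proof -
  obtain r where "r > 0" and ball: "cball c r \<subseteq> U"
    using open_contains_cball[THEN iffD1, OF open_interior] c(2) by blast
  have "cball c r \<noteq> {}"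
    using \<open>r > 0\<close> by simp
  then obtain m where "m \<in> cball c r" and M: "\<forall>w\<in>cball c r. f w \<le> f m"
    using continuous_attains_sup[OF compact_cball \<open>cball c r \<noteq> {}\<close>
        continuous_on_subset[OF continuous_on_f ball]]
    by blast
  have "norm (g (zb + s *\<^sub>R (c - zb))) \<le> (f m - f zb - g y \<bullet> (c - zb)) / r"
    if "0 < s" "s < 1" for s
    using norm_grad_on_segment_to_minimizer_le[OF y zb min c less_imp_le[OF \<open>r > 0\<close>]
        order.trans[OF ball U_subset_edom] _ that] M \<open>r > 0\<close>
    by (simp add: pos_le_divide_eq mult.commute)
  then show ?thesis
    by blast
qed

(* Essential smoothness makes the gradient blow up towards a minimiser on the boundary of edom Phi,
   which contradicts the bound along the segment to an interior point of C. *)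
lemma minimizer_in_U:
  assumes y: "y \<in> U" and zb: "zb \<in> C" "zb \<in> edom \<Phi>"
    and min: "\<And>w. w \<in> C \<Longrightarrow> w \<in> U \<Longrightarrow> D zb y \<le> D w y"
  shows "zb \<in> U"
proof (rule ccontr)
  assume "zb \<notin> U"
  obtain c where c: "c \<in> C" "c \<in> U"
    using C_meets_U by blast
  obtain B where B: "\<And>s. 0 < s \<Longrightarrow> s < 1 \<Longrightarrow> norm (g (zb + s *\<^sub>R (c - zb))) \<le> B"
    using grad_bounded_on_segment_to_minimizer[OF y zb min c] by blast
  define t where "t n = inverse (real (Suc n)) / 2" for n
  have t: "0 < t n" "t n < 1" for n
    by (auto simp: t_def field_simps)
  define zs where "zs n = zb + t n *\<^sub>R (c - zb)" for n
  have zs_eq: "zs n = (1 - (1 - t n)) *\<^sub>R c + (1 - t n) *\<^sub>R zb" for n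
    by (simp add: zs_def algebra_simps)
  have "t \<longlonglongrightarrow> 0"
    unfolding t_def using tendsto_divide_zero[OF LIMSEQ_inverse_real_of_nat] by simp
  then have "zs \<longlonglongrightarrow> zb + 0 *\<^sub>R (c - zb)"
    unfolding zs_def by (intro tendsto_intros)
  then have lim: "zs \<longlonglongrightarrow> zb"
    by simp
  have in_U: "zs n \<in> U" for n
    unfolding zs_eq by (rule convex_combination_in_U[OF c(2) zb(2)]) (use t[of n] in auto)
  have "zb \<in> frontier (edom \<Phi>)"
    using zb(2) \<open>zb \<notin> U\<close> closure_subset unfolding frontier_def by blast
  with in_U lim have "filterlim (\<lambda>n. norm (g (zs n))) at_top sequentially"
    by (rule filterlim_norm_grad_at_frontier)
  then obtain n where "B + 1 \<le> norm (g (zs n))"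
    unfolding filterlim_at_top eventually_sequentially by blast
  moreover have "norm (g (zs n)) \<le> B"
    unfolding zs_def using B t by blast
  ultimately show False by simp
qed

lemma minimizer_unique:
  assumes y: "y \<in> U" and z1: "z1 \<in> C" "z1 \<in> U" and z2: "z2 \<in> C" "z2 \<in> U"
    and min1: "\<And>w. w \<in> C \<Longrightarrow> w \<in> U \<Longrightarrow> D z1 y \<le> D w y"
    and min2: "\<And>w. w \<in> C \<Longrightarrow> w \<in> U \<Longrightarrow> D z2 y \<le> D w y"
  shows "z1 = z2"
proof (rule ccontr)
  assume "z1 \<noteq> z2"
  define m where "m = (1 - 1/2) *\<^sub>R z1 + (1/2::real) *\<^sub>R z2"
  have "m \<in> C"
    unfolding m_def using convexD[OF convex_C z1(1) z2(1)] by simp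
  moreover have "m \<in> U"
    unfolding m_def using convexD[OF convex_U z1(2) z2(2)] by simp
  ultimately have "D z1 y \<le> D m y" "D z2 y \<le> D m y"
    using min1 min2 by auto
  moreover have "f m < 1/2 * f z1 + 1/2 * f z2"
    using strictly_convex_on_U[OF z1(2) z2(2) \<open>z1 \<noteq> z2\<close>, of "1/2"] by (simp add: m_def)
  moreover have "g y \<bullet> m = 1/2 * (g y \<bullet> z1) + 1/2 * (g y \<bullet> z2)"
    by (simp add: m_def inner_add_right)
  ultimately show False
    by (simp add: inner_diff_right)
qed

lemma bregman_proj_minimizer:
  assumes y: "y \<in> U"
  shows "proj y \<in> C" "proj y \<in> U"
    and "\<And>w. w \<in> C \<Longrightarrow> w \<in> edom \<Phi> \<Longrightarrow> D (proj y) y \<le> D w y"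
proof -
  define P where "P z \<longleftrightarrow> z \<in> C \<and> (\<forall>w\<in>C. bregman \<Phi> z y \<le> bregman \<Phi> w y)" for z
  obtain c where c: "c \<in> C" "c \<in> U"
    using C_meets_U by blast
  have minimizer: "z \<in> U \<and> (\<forall>w\<in>C. w \<in> edom \<Phi> \<longrightarrow> D z y \<le> D w y)" if "P z" for z
  proof -
    have "z \<in> edom \<Phi>"
      using \<open>P z\<close> c U_subset_edom bregman_eq[OF y] by (auto simp: P_def split: if_splits)
    then have min: "D z y \<le> D w y" if "w \<in> C" "w \<in> edom \<Phi>" for w
      using \<open>P z\<close> that bregman_eq[OF y] by (auto simp: P_def)
    then have "z \<in> U"
      using minimizer_in_U[OF y _ \<open>z \<in> edom \<Phi>\<close>] \<open>P z\<close> U_subset_edom by (auto simp: P_def)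
    with min show ?thesis by blast
  qed
  obtain z0 where "P z0"
    using bregman_attains_inf_on_closed[OF y closed_C c(1)] c(2) U_subset_edom
    by (auto simp: P_def)
  have "proj y = z0"
    unfolding bregman_proj_def
  proof (rule the_equality)
    show "z0 \<in> C \<and> (\<forall>w\<in>C. bregman \<Phi> z0 y \<le> bregman \<Phi> w y)"
      using \<open>P z0\<close> by (simp add: P_def)
  next
    fix z assume "z \<in> C \<and> (\<forall>w\<in>C. bregman \<Phi> z y \<le> bregman \<Phi> w y)"
    then have "P z" by (simp add: P_def)
    then show "z = z0"
      using minimizer[OF \<open>P z\<close>] minimizer[OF \<open>P z0\<close>] \<open>P z0\<close> U_subset_edom
      by (intro minimizer_unique[OF y]) (auto simp: P_def)
  qed
  then show "proj y \<in> C" "proj y \<in> U"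
    and "\<And>w. w \<in> C \<Longrightarrow> w \<in> edom \<Phi> \<Longrightarrow> D (proj y) y \<le> D w y"
    using minimizer[OF \<open>P z0\<close>] \<open>P z0\<close> by (auto simp: P_def)
qed

lemma bregman_proj_variational_ineq:
  assumes y: "y \<in> U" and w: "w \<in> C"
  shows "0 \<le> (g (proj y) - g y) \<bullet> (w - proj y)"
proof -
  define z where "z = proj y"
  have z: "z \<in> C" "z \<in> U"
    using bregman_proj_minimizer[OF y] by (auto simp: z_def)
  have "((\<lambda>x. D x y) has_derivative (\<lambda>h. (g z - g y) \<bullet> h)) (at z)"
    using has_derivative_grad[OF z(2)]
    by (auto intro!: derivative_eq_intros simp: inner_diff_left)
  moreover have "\<forall>\<^sub>F t in at_right 0. t * 0 \<le> D (z + t *\<^sub>R (w - z)) y - D z y"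
  proof -
    have "((\<lambda>t. z + t *\<^sub>R (w - z)) \<longlongrightarrow> z) (at_right 0)"
      by (auto intro!: tendsto_eq_intros)
    then have "\<forall>\<^sub>F t in at_right 0. z + t *\<^sub>R (w - z) \<in> U"
      using z(2) by (rule topological_tendstoD[OF _ open_interior])
    with eventually_at_right_0_lt_1 show ?thesis
    proof eventually_elim
      case (elim t)
      have "z + t *\<^sub>R (w - z) = (1 - t) *\<^sub>R z + t *\<^sub>R w"
        by (simp add: algebra_simps)
      then have "z + t *\<^sub>R (w - z) \<in> C"
        using convexD[OF convex_C z(1) w, of "1 - t" t] elim by simp
      then have "D z y \<le> D (z + t *\<^sub>R (w - z)) y"
        using bregman_proj_minimizer(3)[OF y] elim U_subset_edom unfolding z_def by blast
      then show ?case
        by simp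
    qed
  qed
  ultimately show ?thesis
    unfolding z_def by (rule has_derivative_inner_ge_of_right_increments)
qed

lemma bregman_proj_three_point_ineq:
  assumes "y \<in> U" "w \<in> C"
  shows "D w (proj y) + D (proj y) y \<le> D w y"
  using bregman_three_point[of w y "proj y"] bregman_proj_variational_ineq[OF assms] by simp

lemma bregman_proj_stability:
  assumes y: "y \<in> U" and y': "y' \<in> U"
  shows "D (proj y') (proj y) \<le> D y' y + (g y' - g y) \<bullet> (proj y' - y') + (D (proj y) y' - D (proj y) y)"
proof -
  have "D (proj y') (proj y) + D (proj y) y \<le> D (proj y') y"
    using bregman_proj_three_point_ineq[OF y] bregman_proj_minimizer(1)[OF y'] .
  moreover have "D (proj y) (proj y') + D (proj y') y' \<le> D (proj y) y'"
    using bregman_proj_three_point_ineq[OF y'] bregman_proj_minimizer(1)[OF y] .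
  moreover have "0 \<le> D (proj y) (proj y')"
    using bregman_nonneg bregman_proj_minimizer(2)[OF y] bregman_proj_minimizer(2)[OF y']
      U_subset_edom by blast
  moreover have "D (proj y') y = D (proj y') y' + D y' y + (g y' - g y) \<bullet> (proj y' - y')"
    by (rule bregman_three_point)
  ultimately show ?thesis
    by linarith
qed

lemma bounded_bregman_proj:
  assumes x: "x \<in> C" "x \<in> edom \<Phi>" and coercive: "coercive (bregman \<Phi> x)"
  shows "bounded (proj ` {y \<in> U. D x y \<le> M})"
proof -
  have "\<forall>\<^sub>F z in at_infinity. ereal M < bregman \<Phi> x z"
    using coercive unfolding coercive_def tendsto_PInfty by blast
  then obtain b where b: "\<And>z. b \<le> norm z \<Longrightarrow> ereal M < bregman \<Phi> x z"
    unfolding eventually_at_infinity by blast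
  have "norm (proj y) < b" if y: "y \<in> U" "D x y \<le> M" for y
  proof (rule ccontr)
    assume "\<not> norm (proj y) < b"
    then have "ereal M < bregman \<Phi> x (proj y)"
      using b by simp
    then have "M < D x (proj y)"
      using bregman_eq[OF bregman_proj_minimizer(2)[OF y(1)]] x(2) by simp
    moreover have "D x (proj y) + D (proj y) y \<le> D x y"
      using bregman_proj_three_point_ineq[OF y(1) x(1)] .
    moreover have "0 \<le> D (proj y) y"
      using bregman_nonneg[OF y(1)] bregman_proj_minimizer(2)[OF y(1)] U_subset_edom by blast
    ultimately show False
      using y(2) by linarith
  qed
  then show ?thesis
    unfolding bounded_iff by (auto intro: less_imp_le)
qed

lemma Bfun_bregman_proj:
  assumes x: "x \<in> C" "x \<in> edom \<Phi>" and coercive: "coercive (bregman \<Phi> x)"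
    and ys: "\<And>n. ys n \<in> U" and y0: "y0 \<in> U" and lim: "ys \<longlonglongrightarrow> y0"
  shows "Bfun (\<lambda>n. proj (ys n)) sequentially"
proof -
  obtain K where K: "\<And>y. y \<in> U \<Longrightarrow> D x y \<le> D x y0 + 1 \<Longrightarrow> norm (proj y) \<le> K"
    using bounded_bregman_proj[OF x coercive, of "D x y0 + 1"] unfolding bounded_iff by blast
  have "(\<lambda>n. D x (ys n)) \<longlonglongrightarrow> D x y0"
    using continuous_on_tendsto_compose[OF continuous_on_bregman_right lim y0] ys by simp
  then have "\<forall>\<^sub>F n in sequentially. D x (ys n) < D x y0 + 1"
    by (rule order_tendstoD(2)) simp
  then have "\<forall>\<^sub>F n in sequentially. D x (ys n) \<le> D x y0 + 1"
    by eventually_elim (rule less_imp_le)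
  then have "\<forall>\<^sub>F n in sequentially. norm (proj (ys n)) \<le> K"
    by eventually_elim (rule K[OF ys])
  then show ?thesis
    by (rule BfunI)
qed

lemma tendsto_grad_diff_inner_bregman_proj:
  assumes x: "x \<in> C" "x \<in> edom \<Phi>" and coercive: "coercive (bregman \<Phi> x)"
    and ys: "\<And>n. ys n \<in> U" and y0: "y0 \<in> U" and lim: "ys \<longlonglongrightarrow> y0"
  shows "(\<lambda>n. (g (ys n) - g y0) \<bullet> (proj (ys n) - ys n)) \<longlonglongrightarrow> 0"
proof -
  have grad_lim: "(\<lambda>n. g (ys n)) \<longlonglongrightarrow> g y0"
    using continuous_on_tendsto_compose[OF continuous_on_grad lim y0] ys by simp
  then have "Zfun (\<lambda>n. g (ys n) - g y0) sequentially"
    by (simp add: tendsto_Zfun_iff)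
  moreover have "Bfun (\<lambda>n. proj (ys n)) sequentially"
    by (rule Bfun_bregman_proj[OF x coercive ys y0 lim])
  ultimately have "Zfun (\<lambda>n. (g (ys n) - g y0) \<bullet> proj (ys n)) sequentially"
    by (rule bounded_bilinear.Zfun_prod_Bfun[OF bounded_bilinear_inner])
  then have "(\<lambda>n. (g (ys n) - g y0) \<bullet> proj (ys n)) \<longlonglongrightarrow> 0"
    by (simp add: tendsto_Zfun_iff)
  moreover have "(\<lambda>n. (g (ys n) - g y0) \<bullet> ys n) \<longlonglongrightarrow> (g y0 - g y0) \<bullet> y0"
    by (intro tendsto_intros grad_lim lim)
  ultimately have
    "(\<lambda>n. (g (ys n) - g y0) \<bullet> proj (ys n) - (g (ys n) - g y0) \<bullet> ys n) \<longlonglongrightarrow> 0 - 0"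
    by (intro tendsto_diff) simp_all
  then show ?thesis
    by (simp add: inner_diff_right)
qed

lemma continuous_on_bregman_proj:
  assumes x: "x \<in> C" "x \<in> edom \<Phi>" and coercive: "coercive (bregman \<Phi> x)"
  shows "continuous_on U proj"
proof (rule continuous_on_sequentiallyI)
  fix ys y0 assume ys: "\<forall>n. ys n \<in> U" and y0: "y0 \<in> U" and lim: "ys \<longlonglongrightarrow> y0"
  define bound where "bound n = D (ys n) y0 + (g (ys n) - g y0) \<bullet> (proj (ys n) - ys n)
      + (D (proj y0) (ys n) - D (proj y0) y0)" for n
  have left: "(\<lambda>n. D (ys n) y0) \<longlonglongrightarrow> 0"
    using continuous_on_tendsto_compose[OF continuous_on_bregman_left[of y0] lim y0] ys by simp
  have mid: "(\<lambda>n. (g (ys n) - g y0) \<bullet> (proj (ys n) - ys n)) \<longlonglongrightarrow> 0"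
    using tendsto_grad_diff_inner_bregman_proj[OF x coercive _ y0 lim] ys by blast
  have right: "(\<lambda>n. D (proj y0) (ys n)) \<longlonglongrightarrow> D (proj y0) y0"
    using continuous_on_tendsto_compose[OF continuous_on_bregman_right lim y0] ys by simp
  have "bound \<longlonglongrightarrow> 0 + 0 + (D (proj y0) y0 - D (proj y0) y0)"
    unfolding bound_def using tendsto_add[OF tendsto_add[OF left mid] tendsto_diff[OF right tendsto_const]] .
  then have "bound \<longlonglongrightarrow> 0"
    by simp
  moreover have "D (proj (ys n)) (proj y0) \<le> bound n" for n
    unfolding bound_def by (rule bregman_proj_stability[OF y0 ys[rule_format]])
  moreover have proj_U: "proj (ys n) \<in> U" for n
    using bregman_proj_minimizer(2) ys by blast
  then have "0 \<le> D (proj (ys n)) (proj y0)" for n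
    using bregman_nonneg[OF bregman_proj_minimizer(2)[OF y0]] U_subset_edom by blast
  ultimately have "(\<lambda>n. D (proj (ys n)) (proj y0)) \<longlonglongrightarrow> 0"
    using tendsto_sandwich[of "\<lambda>_. 0" _ _ bound] by (simp add: always_eventually)
  then show "(\<lambda>n. proj (ys n)) \<longlonglongrightarrow> proj y0"
    using proj_U U_subset_edom
    by (intro tendsto_of_bregman_tendsto_0[OF bregman_proj_minimizer(2)[OF y0]]) auto
qed

end

theorem mainTheorem6:
  fixes \<Phi> :: "'a::euclidean_space \<Rightarrow> ereal" and C :: "'a set"
  assumes "Gamma0 \<Phi>" and "legendre \<Phi>"
    and "closed C" and "convex C" and "C \<inter> interior (edom \<Phi>) \<noteq> {}"
    and "\<exists>x \<in> edom \<Phi> \<inter> C. coercive (bregman \<Phi> x)"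
  shows "continuous_on (interior (edom \<Phi>)) (\<lambda>y. bregman_proj \<Phi> y C)"
proof -
  interpret bregman_projection \<Phi> C
    using assms(1-5) by unfold_locales
  obtain x where "x \<in> C" "x \<in> edom \<Phi>" "coercive (bregman \<Phi> x)"
    using assms(6) by blast
  then show ?thesis
    by (rule continuous_on_bregman_proj)
qed

end
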